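(* Let $\alpha$ be a Riemannian metric and $\beta$ a 1-form on a manifold, and let $k_1,k_2,k_3$ be constants with $1+(k_1+k_3)t+k_2t^2>0$ for $0\le t\le b^2$. Suppose $$b_{i|j}=2\tau\{(1+k_1b^2)a_{ij}+(k_2b^2+k_3)b_ib_j\}$$ for a scalar function $\tau$. Let $c=c(b^2)=\exp\big(\int_0^{b^2}\frac12\frac{k_3+k_2t}{1+(k_1+k_3)t+k_2t^2}dt\big)$ and $\tilde\beta=\beta/c$. Then the covariant derivative of $\tilde\beta$ with respect to $\alpha$ satisfies $$\tilde b_{i|j}=\frac{2\tau(1+k_1b^2)}{c}\,a_{ij};$$ in particular $\tilde\beta$ is closed and conformal with respect to $\alpha$.
   Context: For $\alpha=\sqrt{a_{ij}y^iy^j}$ and $\beta=b_iy^i$: $b=\|\beta\|_\alpha=\sqrt{a^{ij}b_ib_j}$, and $b_{i|j}$ denotes the covariant derivative of $\beta$ with respect to the Levi-Civita connection of $\alpha$. A 1-form is closed if its covariant derivative is symmetric. *)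

theory Defs
  imports "HOL-Analysis.Analysis"
begin

text \<open>Local-coordinate setting: an open coordinate domain U in R^n (index type 'n).\<close>

definition partial :: "(real^'n \<Rightarrow> real) \<Rightarrow> 'n \<Rightarrow> real^'n \<Rightarrow> real" where
  "partial f j x = frechet_derivative f (at x) (axis j 1)"

definition riemannian_metric_on :: "(real^'n) set \<Rightarrow> (real^'n \<Rightarrow> real^'n^'n) \<Rightarrow> bool" where
  "riemannian_metric_on U A \<longleftrightarrow> open U \<and> (\<forall>x\<in>U.
      (\<forall>i j. A x $ i $ j = A x $ j $ i) \<and>
      (\<forall>v. v \<noteq> 0 \<longrightarrow> v \<bullet> (A x *v v) > 0) \<and>
      (\<forall>i j. (\<lambda>y. A y $ i $ j) differentiable (at x)))"

definition one_form_on :: "(real^'n) set \<Rightarrow> (real^'n \<Rightarrow> real^'n) \<Rightarrow> bool" where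
  "one_form_on U b \<longleftrightarrow> (\<forall>x\<in>U. \<forall>i. (\<lambda>y. b y $ i) differentiable (at x))"

definition christoffel :: "(real^'n \<Rightarrow> real^'n^'n) \<Rightarrow> real^'n \<Rightarrow> 'n \<Rightarrow> 'n \<Rightarrow> 'n \<Rightarrow> real" where
  "christoffel A x k i j =
     (\<Sum>l\<in>UNIV. matrix_inv (A x) $ k $ l *
        (partial (\<lambda>y. A y $ j $ l) i x + partial (\<lambda>y. A y $ i $ l) j x
         - partial (\<lambda>y. A y $ i $ j) l x)) / 2"

definition covd :: "(real^'n \<Rightarrow> real^'n^'n) \<Rightarrow> (real^'n \<Rightarrow> real^'n) \<Rightarrow> real^'n \<Rightarrow> 'n \<Rightarrow> 'n \<Rightarrow> real" where
  "covd A b x i j = partial (\<lambda>y. b y $ i) j x - (\<Sum>k\<in>UNIV. christoffel A x k i j * b x $ k)"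

definition bsq :: "(real^'n \<Rightarrow> real^'n^'n) \<Rightarrow> (real^'n \<Rightarrow> real^'n) \<Rightarrow> real^'n \<Rightarrow> real" where
  "bsq A b x = (\<Sum>i\<in>UNIV. \<Sum>j\<in>UNIV. matrix_inv (A x) $ i $ j * b x $ i * b x $ j)"

end

theory Submission
  imports Defs
begin

text \<open>Metric compatibility of the Levi-Civita connection gives
  \<open>\<partial>\<^sub>k(b\<^sup>2) = 2 b\<^sup>i b\<^sub>i\<^sub>|\<^sub>k\<close>, so the hypothesis on \<open>b\<^sub>i\<^sub>|\<^sub>j\<close> yields
  \<open>\<partial>\<^sub>k(b\<^sup>2) = 4\<tau> (1 + (k\<^sub>1 + k\<^sub>3) b\<^sup>2 + k\<^sub>2 b\<^sup>4) b\<^sub>k\<close>. For a scalar factor \<open>f\<close> the Leibniz rule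
  reads \<open>(f b)\<^sub>i\<^sub>|\<^sub>k = f b\<^sub>i\<^sub>|\<^sub>k + b\<^sub>i \<partial>\<^sub>kf\<close>. Taking \<open>f = 1/c(b\<^sup>2)\<close> gives
  \<open>\<partial>\<^sub>kf = -(c'/c\<^sup>2) \<partial>\<^sub>k(b\<^sup>2)\<close>, and \<open>c'/c\<close> is precisely the integrand defining \<open>c\<close>,
  chosen so that the \<open>b\<^sub>i b\<^sub>k\<close> terms cancel and only the multiple of \<open>a\<^sub>i\<^sub>k\<close> survives.\<close>

section \<open>Linear algebra\<close>

lemma matrix_inv_right:
  fixes M :: "'a::semiring_1^'n^'n"
  assumes "invertible M"
  shows "M ** matrix_inv M = mat 1"
  using assms unfolding invertible_def matrix_inv_def by (rule someI2_ex) auto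

lemma matrix_inv_left:
  fixes M :: "'a::semiring_1^'n^'n"
  assumes "invertible M"
  shows "matrix_inv M ** M = mat 1"
  using assms unfolding invertible_def matrix_inv_def by (rule someI2_ex) auto

lemma positive_definite_imp_invertible:
  fixes M :: "real^'n^'n"
  assumes "\<forall>v. v \<noteq> 0 \<longrightarrow> v \<bullet> (M *v v) > 0"
  shows "invertible M"
proof -
  have "\<forall>v. M *v v = 0 \<longrightarrow> v = 0" using assms by force
  then have "\<exists>B. B ** M = mat 1" by (simp add: matrix_left_invertible_ker)
  then show ?thesis by (simp add: invertible_left_inverse)
qed

lemma symmetric_matrix_inv:
  fixes M :: "'a::comm_semiring_1^'n^'n"
  assumes "transpose M = M" "invertible M"
  shows "transpose (matrix_inv M) = matrix_inv M"
proof -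
  let ?N = "matrix_inv M"
  have "transpose ?N = transpose ?N ** (M ** ?N)" by (simp add: matrix_inv_right assms)
  also have "\<dots> = transpose (M ** ?N) ** ?N"
    using assms(1) by (simp add: matrix_mul_assoc matrix_transpose_mul)
  also have "\<dots> = ?N" by (simp add: matrix_inv_right assms)
  finally show ?thesis .
qed

lemma symmetric_matrix_entry:
  assumes "transpose M = M"
  shows "M $ i $ j = M $ j $ i"
proof -
  have "M $ i $ j = transpose M $ j $ i" by (simp add: transpose_def)
  then show ?thesis using assms by simp
qed

lemma inner_symmetric_matrix:
  fixes M :: "real^'n^'n"
  assumes "transpose M = M"
  shows "u \<bullet> (M *v w) = (M *v u) \<bullet> w"
proof -
  have "u v* M = M *v u" using vector_transpose_matrix[of u M] assms by simp
  then show ?thesis by (simp flip: dot_lmul_matrix)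
qed

lemma inner_matrix_inv_nonneg:
  fixes M :: "real^'n^'n"
  assumes "\<forall>v. v \<noteq> 0 \<longrightarrow> v \<bullet> (M *v v) > 0"
  shows "0 \<le> u \<bullet> (matrix_inv M *v u)"
proof -
  define w where "w = matrix_inv M *v u"
  have "u = M *v w"
    by (simp add: w_def matrix_vector_mul_assoc matrix_inv_right
        positive_definite_imp_invertible[OF assms])
  then have "u \<bullet> w = w \<bullet> (M *v w)" by (simp add: inner_commute)
  moreover have "0 \<le> w \<bullet> (M *v w)"
    using assms by (cases "w = 0") (auto intro: less_imp_le)
  ultimately show ?thesis by (simp add: w_def)
qed

lemma uminus_matrix_vector_mult:
  fixes M :: "'a::ring_1^'n^'m"
  shows "(- M) *v v = - (M *v v)"
  by (simp add: vec_eq_iff matrix_vector_mult_def sum_negf)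

lemma sum_bilinear_eq_inner:
  fixes M :: "real^'n^'n"
  shows "(\<Sum>i\<in>UNIV. \<Sum>j\<in>UNIV. M $ i $ j * u $ i * w $ j) = u \<bullet> (M *v w)"
  by (simp add: inner_vec_def matrix_vector_mult_def sum_distrib_left mult_ac)

lemma matrix_inv_cramer:
  fixes M :: "real^'n^'n"
  assumes "invertible M"
  shows "matrix_inv M $ k $ l = det (\<chi> i j. if j = k then axis l 1 $ i else M $ i $ j) / det M"
proof -
  have det: "det M \<noteq> 0" using assms invertible_det_nz by blast
  have "M *v (matrix_inv M *v axis l 1) = axis l 1"
    by (simp add: matrix_vector_mul_assoc matrix_inv_right assms)
  then have "matrix_inv M *v axis l 1
      = (\<chi> k. det (\<chi> i j. if j = k then axis l 1 $ i else M $ i $ j) / det M)"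
    using cramer[OF det] by blast
  then have "(matrix_inv M *v axis l 1) $ k
      = det (\<chi> i j. if j = k then axis l 1 $ i else M $ i $ j) / det M" by simp
  then show ?thesis by (metis cart_eq_inner_axis matrix_vector_mul_component)
qed

section \<open>Partial derivatives\<close>

lemma differentiable_prod:
  fixes f :: "'i \<Rightarrow> 'a::real_normed_vector \<Rightarrow> real"
  assumes "\<And>i. i \<in> I \<Longrightarrow> f i differentiable (at x)"
  shows "(\<lambda>y. \<Prod>i\<in>I. f i y) differentiable (at x)"
proof -
  obtain D where "\<And>i. i \<in> I \<Longrightarrow> (f i has_derivative D i) (at x)"
    using assms unfolding differentiable_def by metis
  then show ?thesis unfolding differentiable_def by (auto intro!: has_derivative_prod)
qed

lemma differentiable_det:
  fixes M :: "'a::real_normed_vector \<Rightarrow> real^'n^'n"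
  assumes "\<And>i j. (\<lambda>y. M y $ i $ j) differentiable (at x)"
  shows "(\<lambda>y. det (M y)) differentiable (at x)"
  unfolding det_def by (auto intro!: differentiable_sum differentiable_mult differentiable_prod assms)

lemma differentiable_matrix_inv:
  fixes A :: "'a::real_normed_vector \<Rightarrow> real^'n^'n"
  assumes "open U" "x \<in> U" "\<And>y. y \<in> U \<Longrightarrow> invertible (A y)"
    and "\<And>i j. (\<lambda>y. A y $ i $ j) differentiable (at x)"
  shows "(\<lambda>y. matrix_inv (A y) $ k $ l) differentiable (at x)"
proof -
  let ?M = "\<lambda>y. (\<chi> i j. if j = k then axis l 1 $ i else A y $ i $ j) :: real^'n^'n"
  have "(\<lambda>y. det (?M y)) differentiable (at x)"
  proof (rule differentiable_det)
    fix i j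
    show "(\<lambda>y. ?M y $ i $ j) differentiable (at x)" using assms(4) by (cases "j = k") auto
  qed
  moreover have "(\<lambda>y. det (A y)) differentiable (at x)" by (rule differentiable_det[OF assms(4)])
  moreover have "det (A x) \<noteq> 0" using assms(2,3) invertible_det_nz by blast
  ultimately have "(\<lambda>y. det (?M y) / det (A y)) differentiable (at x)" by simp
  then obtain D where "((\<lambda>y. det (?M y) / det (A y)) has_derivative D) (at x)"
    unfolding differentiable_def by blast
  then have "((\<lambda>y. matrix_inv (A y) $ k $ l) has_derivative D) (at x)"
    by (rule has_derivative_transform_within_open[OF _ assms(1,2)])
      (simp add: matrix_inv_cramer assms(3))
  then show ?thesis unfolding differentiable_def by blast
qed

lemma partial_eq_derivative: "(f has_derivative D) (at x) \<Longrightarrow> partial f j x = D (axis j 1)"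
  unfolding partial_def by (metis frechet_derivative_at)

lemma partial_transform_within_open:
  assumes "f differentiable (at x)" "open X" "x \<in> X" "\<And>y. y \<in> X \<Longrightarrow> f y = g y"
  shows "partial f j x = partial g j x"
  unfolding partial_def using frechet_derivative_transform_within_open[OF assms] by simp

lemma partial_const: "partial (\<lambda>y. c) j x = 0"
  unfolding partial_def by simp

lemma partial_mult:
  fixes f g :: "real^'n \<Rightarrow> real"
  assumes "f differentiable (at x)" "g differentiable (at x)"
  shows "partial (\<lambda>y. f y * g y) j x = f x * partial g j x + partial f j x * g x"
proof -
  obtain F G where F: "(f has_derivative F) (at x)" and G: "(g has_derivative G) (at x)"
    using assms by (auto simp: differentiable_def)
  show ?thesis
    using partial_eq_derivative[OF has_derivative_mult[OF F G]]
      partial_eq_derivative[OF F] partial_eq_derivative[OF G] by simp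
qed

lemma partial_sum:
  fixes f :: "'i \<Rightarrow> real^'n \<Rightarrow> real"
  assumes "\<And>i. i \<in> I \<Longrightarrow> f i differentiable (at x)"
  shows "partial (\<lambda>y. \<Sum>i\<in>I. f i y) j x = (\<Sum>i\<in>I. partial (f i) j x)"
proof -
  obtain D where D: "\<And>i. i \<in> I \<Longrightarrow> (f i has_derivative D i) (at x)"
    using assms unfolding differentiable_def by metis
  show ?thesis
    using partial_eq_derivative[OF has_derivative_sum[of I f D, OF D]]
      partial_eq_derivative[OF D] by simp
qed

definition partial_vector :: "(real^'n \<Rightarrow> real^'m) \<Rightarrow> 'n \<Rightarrow> real^'n \<Rightarrow> real^'m" where
  "partial_vector b j x = (\<chi> p. partial (\<lambda>y. b y $ p) j x)"

definition partial_matrix :: "(real^'n \<Rightarrow> real^'m^'k) \<Rightarrow> 'n \<Rightarrow> real^'n \<Rightarrow> real^'m^'k" where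
  "partial_matrix A j x = (\<chi> p q. partial (\<lambda>y. A y $ p $ q) j x)"

lemma partial_matrix_inv:
  fixes A :: "real^'n \<Rightarrow> real^'m^'m"
  assumes "open U" "x \<in> U" "\<And>y. y \<in> U \<Longrightarrow> invertible (A y)"
    and "\<And>i j. (\<lambda>y. A y $ i $ j) differentiable (at x)"
  shows "partial_matrix (\<lambda>y. matrix_inv (A y)) j x
    = - (matrix_inv (A x) ** partial_matrix A j x ** matrix_inv (A x))"
proof -
  let ?B = "\<lambda>y. matrix_inv (A y)"
  let ?dA = "partial_matrix A j x" and ?dB = "partial_matrix ?B j x"
  have Bdiff: "\<And>p q. (\<lambda>y. ?B y $ p $ q) differentiable (at x)"
    by (rule differentiable_matrix_inv[OF assms])
  have "(A x ** ?dB + ?dA ** ?B x) $ p $ q = 0" for p q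
  proof -
    have "(A x ** ?dB + ?dA ** ?B x) $ p $ q = partial (\<lambda>y. (A y ** ?B y) $ p $ q) j x"
      using assms(4) Bdiff
      by (simp add: matrix_matrix_mult_def partial_matrix_def partial_sum partial_mult
          sum.distrib mult.commute)
    also have "\<dots> = partial (\<lambda>y. mat 1 $ p $ q) j x"
    proof (rule partial_transform_within_open[OF _ assms(1,2)])
      show "(\<lambda>y. (A y ** ?B y) $ p $ q) differentiable (at x)"
        using assms(4) Bdiff by (simp add: matrix_matrix_mult_def)
    qed (simp add: matrix_inv_right assms(3))
    finally show ?thesis by (simp add: partial_const)
  qed
  then have "?B x ** (A x ** ?dB + ?dA ** ?B x) = 0"
    by (simp add: vec_eq_iff matrix_matrix_mult_def)
  then have "?dB + ?B x ** ?dA ** ?B x = 0"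
    by (simp add: matrix_add_ldistrib matrix_mul_assoc matrix_inv_left assms(2,3))
  then show ?thesis by (simp add: eq_neg_iff_add_eq_0)
qed


section \<open>Covariant derivatives\<close>

lemma riemannian_metric_onD:
  assumes "riemannian_metric_on U A" "x \<in> U"
  shows "open U" "transpose (A x) = A x" "invertible (A x)"
    and "transpose (matrix_inv (A x)) = matrix_inv (A x)"
    and "(\<lambda>y. A y $ i $ j) differentiable (at x)"
proof -
  have pd: "\<forall>v. v \<noteq> 0 \<longrightarrow> v \<bullet> (A x *v v) > 0"
    using assms unfolding riemannian_metric_on_def by blast
  show "open U" "(\<lambda>y. A y $ i $ j) differentiable (at x)"
    using assms unfolding riemannian_metric_on_def by auto
  show sym: "transpose (A x) = A x"
    using assms unfolding riemannian_metric_on_def by (auto simp: vec_eq_iff transpose_def)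
  show inv: "invertible (A x)" by (rule positive_definite_imp_invertible[OF pd])
  show "transpose (matrix_inv (A x)) = matrix_inv (A x)" by (rule symmetric_matrix_inv[OF sym inv])
qed

lemma bsq_eq_inner: "bsq A b x = b x \<bullet> (matrix_inv (A x) *v b x)"
  unfolding bsq_def by (rule sum_bilinear_eq_inner)

lemma bsq_nonneg:
  assumes "riemannian_metric_on U A" "x \<in> U"
  shows "0 \<le> bsq A b x"
  using assms inner_matrix_inv_nonneg unfolding bsq_eq_inner riemannian_metric_on_def by blast

lemma eventually_bsq_nonneg:
  assumes "riemannian_metric_on U A" "x \<in> U"
  shows "\<forall>\<^sub>F y in nhds x. 0 \<le> bsq A b y"
  using riemannian_metric_onD(1)[OF assms] assms bsq_nonneg[OF assms(1)]
  unfolding eventually_nhds by blast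

lemma bsq_differentiable:
  assumes "riemannian_metric_on U A" "x \<in> U" "\<And>i. (\<lambda>y. b y $ i) differentiable (at x)"
  shows "bsq A b differentiable (at x)"
proof -
  have "(\<lambda>y. matrix_inv (A y) $ i $ j) differentiable (at x)" for i j
    using riemannian_metric_onD[OF assms(1)] assms(2)
    by (intro differentiable_matrix_inv[of U]) auto
  then show ?thesis unfolding bsq_def using assms(3) by simp
qed

lemma partial_bsq:
  assumes "riemannian_metric_on U A" "x \<in> U" "\<And>i. (\<lambda>y. b y $ i) differentiable (at x)"
  defines "v \<equiv> matrix_inv (A x) *v b x"
  shows "partial (bsq A b) j x
    = 2 * (v \<bullet> partial_vector b j x) - v \<bullet> (partial_matrix A j x *v v)"
proof -
  let ?B = "matrix_inv (A x)" and ?db = "partial_vector b j x" and ?dA = "partial_matrix A j x"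
  let ?dB = "partial_matrix (\<lambda>y. matrix_inv (A y)) j x"
  note A = riemannian_metric_onD[OF assms(1)]
  have Bdiff: "(\<lambda>y. matrix_inv (A y) $ p $ q) differentiable (at x)" for p q
    using A assms(2) by (intro differentiable_matrix_inv[of U]) auto
  have "partial (bsq A b) j x = (\<Sum>i\<in>UNIV. \<Sum>l\<in>UNIV. ?B $ i $ l * b x $ i * ?db $ l)
      + (\<Sum>i\<in>UNIV. \<Sum>l\<in>UNIV. ?B $ i $ l * ?db $ i * b x $ l)
      + (\<Sum>i\<in>UNIV. \<Sum>l\<in>UNIV. ?dB $ i $ l * b x $ i * b x $ l)"
    unfolding bsq_def using Bdiff assms(3)
    by (simp add: partial_sum partial_mult partial_vector_def partial_matrix_def
        sum.distrib algebra_simps)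
  also have "\<dots> = b x \<bullet> (?B *v ?db) + ?db \<bullet> (?B *v b x) + b x \<bullet> (?dB *v b x)"
    by (simp only: sum_bilinear_eq_inner)
  also have "?dB = - (?B ** ?dA ** ?B)"
    using A assms(2) by (intro partial_matrix_inv[of U]) auto
  also have "b x \<bullet> ((- (?B ** ?dA ** ?B)) *v b x) = - (v \<bullet> (?dA *v v))"
  proof -
    have "b x \<bullet> ((- (?B ** ?dA ** ?B)) *v b x) = - (b x \<bullet> (?B *v (?dA *v v)))"
      by (simp only: v_def matrix_vector_mul_assoc matrix_mul_assoc
          uminus_matrix_vector_mult inner_minus_right)
    also have "b x \<bullet> (?B *v (?dA *v v)) = v \<bullet> (?dA *v v)"
      unfolding v_def by (rule inner_symmetric_matrix[OF A(4)[OF assms(2)]])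
    finally show ?thesis .
  qed
  finally have "partial (bsq A b) j x
      = b x \<bullet> (?B *v ?db) + ?db \<bullet> (?B *v b x) - v \<bullet> (?dA *v v)" by simp
  moreover have "b x \<bullet> (?B *v ?db) = v \<bullet> ?db"
    unfolding v_def by (rule inner_symmetric_matrix[OF A(4)[OF assms(2)]])
  moreover have "?db \<bullet> (?B *v b x) = v \<bullet> ?db"
    unfolding v_def by (rule inner_commute)
  ultimately show ?thesis by simp
qed


text \<open>Contracted with the symmetric \<open>v\<^sup>i v\<^sup>l\<close>, the first and last terms of the Christoffel
  symbol cancel.\<close>

lemma christoffel_contraction:
  fixes w :: "real^'n"
  assumes "riemannian_metric_on U A" "x \<in> U"
  defines "v \<equiv> matrix_inv (A x) *v w"
  shows "(\<Sum>i\<in>UNIV. v $ i * (\<Sum>m\<in>UNIV. christoffel A x m i j * w $ m))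
    = v \<bullet> (partial_matrix A j x *v v) / 2"
proof -
  let ?B = "matrix_inv (A x)" and ?dA = "\<lambda>p q i. partial (\<lambda>y. A y $ p $ q) i x"
  note A = riemannian_metric_onD[OF assms(1)]
  have dA_sym: "?dA p q i = ?dA q p i" for p q i
  proof (rule partial_transform_within_open[OF _ A(1)[OF assms(2)] assms(2)])
    show "(\<lambda>y. A y $ p $ q) differentiable (at x)" by (rule A(5)[OF assms(2)])
    show "A y $ p $ q = A y $ q $ p" if "y \<in> U" for y
      using A(2)[OF that] by (rule symmetric_matrix_entry)
  qed
  have B_sym: "?B $ m $ l = ?B $ l $ m" for m l
    using A(4)[OF assms(2)] by (rule symmetric_matrix_entry)
  define G where "G i l = ?dA j l i + ?dA i l j - ?dA i j l" for i l
  have contract_index: "(\<Sum>m\<in>UNIV. christoffel A x m i j * w $ m) = (\<Sum>l\<in>UNIV. v $ l * G i l) / 2" for i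
  proof -
    have "(\<Sum>m\<in>UNIV. christoffel A x m i j * w $ m)
        = (\<Sum>m\<in>UNIV. \<Sum>l\<in>UNIV. ?B $ m $ l * G i l * w $ m) / 2"
      unfolding christoffel_def G_def by (simp add: sum_divide_distrib sum_distrib_right)
    also have "\<dots> = (\<Sum>l\<in>UNIV. \<Sum>m\<in>UNIV. ?B $ l $ m * w $ m * G i l) / 2"
      by (subst sum.swap) (simp add: B_sym mult_ac)
    also have "\<dots> = (\<Sum>l\<in>UNIV. v $ l * G i l) / 2"
      by (simp add: v_def matrix_vector_mult_def sum_distrib_right)
    finally show ?thesis .
  qed
  then have "(\<Sum>i\<in>UNIV. v $ i * (\<Sum>m\<in>UNIV. christoffel A x m i j * w $ m))
      = (\<Sum>i\<in>UNIV. \<Sum>l\<in>UNIV. v $ i * v $ l * G i l) / 2"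
    by (simp only: contract_index) (simp add: sum_distrib_left sum_divide_distrib mult.assoc)
  also have "\<dots> = ((\<Sum>i\<in>UNIV. \<Sum>l\<in>UNIV. v $ i * v $ l * ?dA j l i)
        + (\<Sum>i\<in>UNIV. \<Sum>l\<in>UNIV. v $ i * v $ l * ?dA i l j)
        - (\<Sum>i\<in>UNIV. \<Sum>l\<in>UNIV. v $ i * v $ l * ?dA i j l)) / 2"
    by (simp add: G_def distrib_left right_diff_distrib sum.distrib sum_subtractf)
  also have "(\<Sum>i\<in>UNIV. \<Sum>l\<in>UNIV. v $ i * v $ l * ?dA i j l)
      = (\<Sum>i\<in>UNIV. \<Sum>l\<in>UNIV. v $ i * v $ l * ?dA j l i)"
    by (subst sum.swap) (simp add: dA_sym mult_ac)
  also have "(\<Sum>i\<in>UNIV. \<Sum>l\<in>UNIV. v $ i * v $ l * ?dA i l j) = v \<bullet> (partial_matrix A j x *v v)"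
    by (simp add: sum_bilinear_eq_inner[symmetric] partial_matrix_def mult_ac)
  finally show ?thesis by simp
qed

lemma partial_bsq_eq_covd:
  assumes "riemannian_metric_on U A" "x \<in> U" "\<And>i. (\<lambda>y. b y $ i) differentiable (at x)"
  shows "partial (bsq A b) j x = 2 * (\<Sum>i\<in>UNIV. (matrix_inv (A x) *v b x) $ i * covd A b x i j)"
proof -
  let ?v = "matrix_inv (A x) *v b x"
  have "(\<Sum>i\<in>UNIV. ?v $ i * covd A b x i j)
      = ?v \<bullet> partial_vector b j x - (\<Sum>i\<in>UNIV. ?v $ i * (\<Sum>m\<in>UNIV. christoffel A x m i j * b x $ m))"
    unfolding covd_def by (simp add: inner_vec_def partial_vector_def right_diff_distrib sum_subtractf)
  then show ?thesis
    using partial_bsq[OF assms] christoffel_contraction[OF assms(1,2)] by simp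
qed

lemma partial_bsq_conformal:
  assumes "riemannian_metric_on U A" "x \<in> U" "\<And>i. (\<lambda>y. b y $ i) differentiable (at x)"
    and "\<And>i j. covd A b x i j = p * A x $ i $ j + q * b x $ i * b x $ j"
  shows "partial (bsq A b) j x = 2 * (p + q * bsq A b x) * b x $ j"
proof -
  let ?v = "matrix_inv (A x) *v b x"
  note A = riemannian_metric_onD[OF assms(1,2)]
  have "(\<Sum>i\<in>UNIV. ?v $ i * A x $ i $ j) = (A x *v ?v) $ j"
    using symmetric_matrix_entry[OF A(2)] by (simp add: matrix_vector_mult_def mult.commute)
  also have "\<dots> = b x $ j" by (simp add: matrix_vector_mul_assoc matrix_inv_right A(3))
  finally have vA: "(\<Sum>i\<in>UNIV. ?v $ i * A x $ i $ j) = b x $ j" .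
  have vb: "(\<Sum>i\<in>UNIV. ?v $ i * b x $ i) = bsq A b x"
    by (simp add: bsq_eq_inner inner_vec_def mult.commute)
  have "(\<Sum>i\<in>UNIV. ?v $ i * covd A b x i j)
      = p * (\<Sum>i\<in>UNIV. ?v $ i * A x $ i $ j) + q * b x $ j * (\<Sum>i\<in>UNIV. ?v $ i * b x $ i)"
    by (simp add: assms(4) sum_distrib_left sum.distrib algebra_simps)
  then show ?thesis
    using partial_bsq_eq_covd[OF assms(1-3)] vA vb by (simp add: algebra_simps)
qed

lemma covd_scaleR:
  assumes "f differentiable (at x)" "\<And>i. (\<lambda>y. b y $ i) differentiable (at x)"
  shows "covd A (\<lambda>y. f y *\<^sub>R b y) x i j = f x * covd A b x i j + partial f j x * b x $ i"
  unfolding covd_def using assms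
  by (simp add: partial_mult sum_distrib_left right_diff_distrib algebra_simps)


section \<open>The integrating factor\<close>

lemma exp_integral_has_real_derivative:
  fixes g :: "real \<Rightarrow> real"
  assumes "continuous_on {a..b} g" "t \<in> {a..b}"
  shows "((\<lambda>u. exp (integral {a..u} g)) has_real_derivative exp (integral {a..t} g) * g t)
    (at t within {a..b})"
proof -
  have "((\<lambda>u. integral {a..u} g) has_real_derivative g t) (at t within {a..b})"
    using integral_has_vector_derivative[OF assms]
    by (simp add: has_real_derivative_iff_has_vector_derivative)
  then show ?thesis by (auto intro!: derivative_eq_intros)
qed

lemma has_derivative_compose_eventually:
  fixes \<phi> :: "'a::real_normed_vector \<Rightarrow> real"
  assumes "(\<phi> has_derivative \<Phi>) (at x)" "(h has_real_derivative h') (at (\<phi> x) within T)"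
    and "\<forall>\<^sub>F y in nhds x. \<phi> y \<in> T"
  shows "((\<lambda>y. h (\<phi> y)) has_derivative (\<lambda>v. h' * \<Phi> v)) (at x)"
proof -
  obtain S where S: "open S" "x \<in> S" "\<And>y. y \<in> S \<Longrightarrow> \<phi> y \<in> T"
    using assms(3) unfolding eventually_nhds by blast
  have "(h has_derivative (*) h') (at (\<phi> x) within \<phi> ` S)"
    using has_derivative_subset assms(2) S(3) unfolding has_field_derivative_def by blast
  then have "((h \<circ> \<phi>) has_derivative ((*) h' \<circ> \<Phi>)) (at x within S)"
    by (rule diff_chain_within[OF has_derivative_at_withinI[OF assms(1)]])
  then show ?thesis using at_within_open[OF S(2,1)] by (simp add: o_def)
qed

lemma exp_integral_comp_has_derivative:
  fixes \<phi> :: "'a::real_normed_vector \<Rightarrow> real"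
  assumes "(\<phi> has_derivative \<Phi>) (at x)" "\<forall>\<^sub>F y in nhds x. 0 \<le> \<phi> y"
    and "continuous_on {0..r} g" "\<phi> x < r"
  shows "((\<lambda>y. exp (integral {0..\<phi> y} g))
    has_derivative (\<lambda>v. exp (integral {0..\<phi> x} g) * g (\<phi> x) * \<Phi> v)) (at x)"
proof -
  have "(\<phi> \<longlongrightarrow> \<phi> x) (nhds x)"
    using has_derivative_continuous[OF assms(1)]
    by (simp add: continuous_at tendsto_at_iff_tendsto_nhds)
  then have "\<forall>\<^sub>F y in nhds x. \<phi> y < r" using assms(4) by (rule order_tendstoD)
  then have near: "\<forall>\<^sub>F y in nhds x. \<phi> y \<in> {0..r}"
    using assms(2) by (auto elim: eventually_mono[OF eventually_conj])
  show ?thesis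
    by (rule has_derivative_compose_eventually[OF assms(1)
          exp_integral_has_real_derivative[OF assms(3) eventually_nhds_x_imp_x[OF near]] near])
qed

lemma positive_beyond:
  fixes D :: "real \<Rightarrow> real"
  assumes "isCont D s" "a \<le> s" "\<And>t. a \<le> t \<Longrightarrow> t \<le> s \<Longrightarrow> 0 < D t"
  shows "\<exists>r>s. \<forall>t\<in>{a..r}. 0 < D t"
proof -
  have "(D \<longlongrightarrow> D s) (nhds s)" "0 < D s"
    using assms by (simp_all add: isCont_def tendsto_at_iff_tendsto_nhds)
  then have "\<forall>\<^sub>F t in nhds s. 0 < D t" by (rule order_tendstoD)
  then obtain d where d: "0 < d" "\<And>t. dist t s < d \<Longrightarrow> 0 < D t"
    unfolding eventually_nhds_metric by blast
  have "0 < D t" if "t \<in> {a..s + d / 2}" for t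
  proof (cases "t \<le> s")
    case True then show ?thesis using that assms(3) by simp
  next
    case False then show ?thesis using that d by (simp add: dist_real_def)
  qed
  then show ?thesis using d(1) by (intro exI[of _ "s + d / 2"]) auto
qed

lemma partial_inverse_exp_integral_comp:
  fixes \<phi> :: "real^'n \<Rightarrow> real" and N D :: "real \<Rightarrow> real"
  assumes "\<phi> differentiable (at x)" "\<forall>\<^sub>F y in nhds x. 0 \<le> \<phi> y"
    and "continuous_on UNIV N" "continuous_on UNIV D" "\<And>t. 0 \<le> t \<Longrightarrow> t \<le> \<phi> x \<Longrightarrow> 0 < D t"
  defines "E \<equiv> \<lambda>u. exp (integral {0..u} (\<lambda>t. N t / D t))"
  shows "(\<lambda>y. inverse (E (\<phi> y))) differentiable (at x)"
    and "partial (\<lambda>y. inverse (E (\<phi> y))) j x = - (N (\<phi> x) / D (\<phi> x)) * partial \<phi> j x / E (\<phi> x)"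
proof -
  obtain \<Phi> where \<Phi>: "(\<phi> has_derivative \<Phi>) (at x)" using assms(1) unfolding differentiable_def by blast
  have "isCont D (\<phi> x)" using assms(4) by (simp add: continuous_on_eq_continuous_at)
  \<comment> \<open>Positivity of \<open>D\<close> is only assumed up to \<open>\<phi> x\<close>; differentiating at \<open>\<phi> x\<close>
    needs the integrand to be continuous a little beyond.\<close>
  then obtain r where "\<phi> x < r" and D_pos: "\<forall>t\<in>{0..r}. 0 < D t"
    using positive_beyond[where a = 0] assms(5) eventually_nhds_x_imp_x[OF assms(2)] by blast
  have "continuous_on {0..r} (\<lambda>t. N t / D t)"
    using D_pos assms(3,4) by (auto intro!: continuous_on_divide intro: continuous_on_subset)
  then have E_der: "((\<lambda>y. E (\<phi> y))
      has_derivative (\<lambda>v. E (\<phi> x) * (N (\<phi> x) / D (\<phi> x)) * \<Phi> v)) (at x)"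
    unfolding E_def using exp_integral_comp_has_derivative[OF \<Phi> assms(2)] \<open>\<phi> x < r\<close> by blast
  have "((\<lambda>y. inverse (E (\<phi> y))) has_derivative (\<lambda>v. - (N (\<phi> x) / D (\<phi> x)) * \<Phi> v / E (\<phi> x))) (at x)"
    by (rule has_derivative_eq_rhs[OF Deriv.has_derivative_inverse[OF _ E_der]])
      (auto simp: E_def fun_eq_iff field_simps)
  then show "(\<lambda>y. inverse (E (\<phi> y))) differentiable (at x)"
    and "partial (\<lambda>y. inverse (E (\<phi> y))) j x = - (N (\<phi> x) / D (\<phi> x)) * partial \<phi> j x / E (\<phi> x)"
    by (auto simp: differentiable_def partial_eq_derivative[OF \<Phi>] partial_eq_derivative)
qed

theorem mainTheorem16:
  fixes U :: "(real^'n) set"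
    and A :: "real^'n \<Rightarrow> real^'n^'n"
    and b :: "real^'n \<Rightarrow> real^'n"
    and \<tau> :: "real^'n \<Rightarrow> real"
    and k1 k2 k3 :: real
    and c :: "real \<Rightarrow> real"
  assumes "riemannian_metric_on U A"
    and "one_form_on U b"
    and "\<And>x t. x \<in> U \<Longrightarrow> 0 \<le> t \<Longrightarrow> t \<le> bsq A b x \<Longrightarrow> 1 + (k1 + k3) * t + k2 * t\<^sup>2 > 0"
    and "\<And>x i j. x \<in> U \<Longrightarrow> covd A b x i j =
           2 * \<tau> x * ((1 + k1 * bsq A b x) * A x $ i $ j + (k2 * bsq A b x + k3) * b x $ i * b x $ j)"
    and "\<And>s. c s = exp (integral {0..s} (\<lambda>t. (1/2) * ((k3 + k2 * t) / (1 + (k1 + k3) * t + k2 * t\<^sup>2))))"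
  shows "\<forall>x\<in>U. \<forall>i j.
           covd A (\<lambda>y. b y /\<^sub>R c (bsq A b y)) x i j
             = 2 * \<tau> x * (1 + k1 * bsq A b x) / c (bsq A b x) * A x $ i $ j
         \<and> covd A (\<lambda>y. b y /\<^sub>R c (bsq A b y)) x i j
             = covd A (\<lambda>y. b y /\<^sub>R c (bsq A b y)) x j i"
proof (intro ballI allI)
  fix x i j assume x: "x \<in> U"
  define s where "s = bsq A b x"
  define N where "N t = (k3 + k2 * t) / 2" for t :: real
  define D where "D t = 1 + (k1 + k3) * t + k2 * t\<^sup>2" for t
  have c_eq: "c = (\<lambda>u. exp (integral {0..u} (\<lambda>t. N t / D t)))"
    using assms(5) by (simp add: N_def D_def fun_eq_iff)
  have b_diff: "(\<lambda>y. b y $ k) differentiable (at x)" for k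
    using assms(2) x unfolding one_form_on_def by blast
  have "continuous_on UNIV N" "continuous_on UNIV D"
    unfolding N_def D_def by (auto intro!: continuous_intros)
  moreover have D_pos: "0 < D t" if "0 \<le> t" "t \<le> bsq A b x" for t
    using assms(3)[OF x that] by (simp add: D_def)
  ultimately have inv_c_diff: "(\<lambda>y. inverse (c (bsq A b y))) differentiable (at x)"
    and inv_c: "partial (\<lambda>y. inverse (c (bsq A b y))) k x
      = - (N s / D s) * partial (bsq A b) k x / c s" for k
    using partial_inverse_exp_integral_comp[OF bsq_differentiable[OF assms(1) x b_diff]
        eventually_bsq_nonneg[OF assms(1) x]]
    unfolding c_eq s_def by blast+
  have covd_b: "covd A b x p q
      = 2 * \<tau> x * (1 + k1 * s) * A x $ p $ q + 2 * \<tau> x * (k2 * s + k3) * b x $ p * b x $ q" for p q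
    using assms(4)[OF x] by (simp add: s_def algebra_simps)
  have "0 < D s" unfolding s_def by (rule D_pos[OF bsq_nonneg[OF assms(1) x] order_refl])
  then have bsq_axis: "N s / D s * partial (bsq A b) k x = 2 * \<tau> x * (k2 * s + k3) * b x $ k" for k
    using partial_bsq_conformal[OF assms(1) x b_diff covd_b]
    by (simp add: N_def D_def s_def power2_eq_square field_simps)
  have conformal: "covd A (\<lambda>y. b y /\<^sub>R c (bsq A b y)) x p q
      = 2 * \<tau> x * (1 + k1 * s) / c s * A x $ p $ q" for p q
  proof -
    have "covd A (\<lambda>y. b y /\<^sub>R c (bsq A b y)) x p q
        = (covd A b x p q - N s / D s * partial (bsq A b) q x * b x $ p) / c s"
      using covd_scaleR[OF inv_c_diff b_diff, of A p q] inv_c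
      by (simp add: s_def divide_inverse algebra_simps)
    also have "\<dots> = 2 * \<tau> x * (1 + k1 * s) / c s * A x $ p $ q"
      unfolding bsq_axis covd_b by (simp add: algebra_simps)
    finally show ?thesis .
  qed
  show "covd A (\<lambda>y. b y /\<^sub>R c (bsq A b y)) x i j
          = 2 * \<tau> x * (1 + k1 * bsq A b x) / c (bsq A b x) * A x $ i $ j
        \<and> covd A (\<lambda>y. b y /\<^sub>R c (bsq A b y)) x i j
          = covd A (\<lambda>y. b y /\<^sub>R c (bsq A b y)) x j i"
    using conformal symmetric_matrix_entry[OF riemannian_metric_onD(2)[OF assms(1) x]]
    by (simp add: s_def)
qed

end
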